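(* Let $P$ be a $d$-polytope. If its slack ideal $I_P$ is a pure difference binomial ideal, then $I_P\subseteq T_P$.
   Context: Let $P\subset\mathbb{R}^d$ be a $d$-dimensional polytope with labelled vertices $\mathbf p_1,\dots,\mathbf p_v$ and labelled facets $F_1,\dots,F_f$. The symbolic slack matrix $S_P(\mathbf x)$ is the $v\times f$ matrix with a $0$ in entry $(i,j)$ if $\mathbf p_i\in F_j$ and a distinct variable $x_{ij}$ otherwise; let $x_1,\dots,x_t$ denote all these variables. The slack ideal is $I_P=\langle (d+2)\text{-minors of } S_P(\mathbf x)\rangle : (x_1\cdots x_t)^\infty\subseteq\mathbb{C}[x_1,\dots,x_t]$. An ideal is a pure difference binomial ideal if it is generated by binomials $\mathbf x^{\mathbf a}-\mathbf x^{\mathbf b}$ with $\mathbf a,\mathbf b\in\mathbb{Z}^t_{\ge0}$. The non-incidence graph $G_P$ is the bipartite graph on the vertices and facets of $P$ with an edge $\{\mathbf p_i,F_j\}$ iff $\mathbf p_i\notin F_j$ (labelled by $x_{ij}$). $T_P$ is the toric ideal of the vertex-edge incidence matrix of $G_P$, i.e. the kernel of the map $x_{ij}\mapsto s_iu_j$ into $\mathbb{C}[s_1^{\pm1},\dots,s_v^{\pm1},u_1^{\pm1},\dots,u_f^{\pm1}]$. *)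

theory Defs
  imports "HOL-Analysis.Analysis" "HOL-Library.Poly_Mapping"
begin

text \<open>Multivariate polynomials over the complex numbers in variables of type 'v:
  finitely supported maps from monomials (finitely supported exponent vectors) to coefficients.\<close>
type_synonym 'v cpoly = "('v \<Rightarrow>\<^sub>0 nat) \<Rightarrow>\<^sub>0 complex"

definition pvar :: "'v \<Rightarrow> 'v cpoly" where
  "pvar v = Poly_Mapping.single (Poly_Mapping.single v 1) 1"

definition pmonom :: "('v \<Rightarrow>\<^sub>0 nat) \<Rightarrow> 'v cpoly" where
  "pmonom a = Poly_Mapping.single a 1"

definition poly_ring :: "'v set \<Rightarrow> 'v cpoly set" where
  "poly_ring V = {f. \<forall>m \<in> Poly_Mapping.keys f. Poly_Mapping.keys m \<subseteq> V}"

definition ideal_gen :: "'v set \<Rightarrow> 'v cpoly set \<Rightarrow> 'v cpoly set" where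
  "ideal_gen V G = {f. \<exists>A c. finite A \<and> A \<subseteq> G \<and> (\<forall>g\<in>A. c g \<in> poly_ring V)
                           \<and> f = (\<Sum>g\<in>A. c g * g)}"

definition saturation :: "'v set \<Rightarrow> 'v cpoly set \<Rightarrow> 'v cpoly set" where
  "saturation V I = {f \<in> poly_ring V. \<exists>k::nat. (\<Prod>v\<in>V. pvar v) ^ k * f \<in> I}"

definition pure_difference_binomial_ideal :: "'v set \<Rightarrow> 'v cpoly set \<Rightarrow> bool" where
  "pure_difference_binomial_ideal V I \<longleftrightarrow>
     (\<exists>G. G \<subseteq> {pmonom a - pmonom b | a b. Poly_Mapping.keys a \<subseteq> V \<and> Poly_Mapping.keys b \<subseteq> V}
          \<and> I = ideal_gen V G)"

definition poly_vertices :: "'a::euclidean_space set \<Rightarrow> 'a set" where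
  "poly_vertices P = {p. p extreme_point_of P}"

definition poly_facets :: "'a::euclidean_space set \<Rightarrow> 'a set set" where
  "poly_facets P = {F. F facet_of P}"

text \<open>Variables of the symbolic slack matrix: non-incident vertex/facet pairs
  (equivalently, the edges of the non-incidence graph G_P).\<close>
definition slack_vars :: "'a::euclidean_space set \<Rightarrow> ('a \<times> 'a set) set" where
  "slack_vars P = {(p, F). p \<in> poly_vertices P \<and> F \<in> poly_facets P \<and> p \<notin> F}"

definition symbolic_slack :: "'a::euclidean_space set \<Rightarrow> 'a \<Rightarrow> 'a set \<Rightarrow> ('a \<times> 'a set) cpoly" where
  "symbolic_slack P p F = (if p \<in> F then 0 else pvar (p, F))"

definition minor_det :: "('r \<Rightarrow> 'c \<Rightarrow> 'b::comm_ring_1) \<Rightarrow> 'r list \<Rightarrow> 'c list \<Rightarrow> 'b" where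
  "minor_det M rs cs =
     (\<Sum>\<sigma> \<in> {\<sigma>. \<sigma> permutes {..<length rs}}.
        of_int (sign \<sigma>) * (\<Prod>i<length rs. M (rs ! i) (cs ! (\<sigma> i))))"

definition slack_minors :: "nat \<Rightarrow> 'a::euclidean_space set \<Rightarrow> ('a \<times> 'a set) cpoly set" where
  "slack_minors k P = {minor_det (symbolic_slack P) rs cs | rs cs.
      distinct rs \<and> distinct cs \<and> length rs = k \<and> length cs = k \<and>
      set rs \<subseteq> poly_vertices P \<and> set cs \<subseteq> poly_facets P}"

definition slack_ideal :: "'a::euclidean_space set \<Rightarrow> ('a \<times> 'a set) cpoly set" where
  "slack_ideal P = saturation (slack_vars P)
      (ideal_gen (slack_vars P) (slack_minors (DIM('a) + 2) P))"

text \<open>The monomial map x_{pF} -> s_p u_F, with s_p = Inl p and u_F = Inr F.\<close>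
definition edge_monomial_map :: "('a \<times> 'a set \<Rightarrow>\<^sub>0 nat) \<Rightarrow> ('a + 'a set \<Rightarrow>\<^sub>0 nat)" where
  "edge_monomial_map m = (\<Sum>(p, F) \<in> Poly_Mapping.keys m.
      Poly_Mapping.single (Inl p) (Poly_Mapping.lookup m (p, F)) + Poly_Mapping.single (Inr F) (Poly_Mapping.lookup m (p, F)))"

definition toric_hom :: "('a \<times> 'a set) cpoly \<Rightarrow> ('a + 'a set) cpoly" where
  "toric_hom f = (\<Sum>m \<in> Poly_Mapping.keys f. Poly_Mapping.single (edge_monomial_map m) (Poly_Mapping.lookup f m))"

definition toric_ideal :: "'a::euclidean_space set \<Rightarrow> ('a \<times> 'a set) cpoly set" where
  "toric_ideal P = {f \<in> poly_ring (slack_vars P). toric_hom f = 0}"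

end

theory Submission
  imports Defs Jordan_Normal_Form.Determinant
begin

text \<open>
  Let \<open>e\<close> assign a nonzero complex number to every vertex and every facet of \<open>P\<close>, and
  rescale the rows and columns of the true slack matrix \<open>S\<close> of \<open>P\<close> accordingly. The result
  is a point with all coordinates \<open>x\<^sub>p\<^sub>F\<close> nonzero which, like \<open>S\<close>, factors through a
  space of dimension \<open>d + 1\<close>; so all \<open>(d+2)\<close>-minors vanish there and, the coordinates being
  nonzero, the whole saturated ideal \<open>I\<^sub>P\<close> vanishes there.

  Evaluating a binomial \<open>x^a - x^b \<in> I\<^sub>P\<close> at these points gives
  \<open>S^a \<cdot> e^\<phi>(a) = S^b \<cdot> e^\<phi>(b)\<close>, where \<open>\<phi>\<close> is the exponent map of \<open>x\<^sub>p\<^sub>F \<mapsto> s\<^sub>p u\<^sub>F\<close>.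
  For \<open>e = 1\<close> this says \<open>S^a = S^b \<noteq> 0\<close>; letting \<open>e\<close> be \<open>2\<close> at a single vertex or facet
  and \<open>1\<close> elsewhere then compares \<open>\<phi>(a)\<close> and \<open>\<phi>(b)\<close> coordinate by coordinate. Hence
  \<open>\<phi>(a) = \<phi>(b)\<close>, i.e. \<open>x^a - x^b \<in> T\<^sub>P\<close>, and an ideal generated by such binomials lies in
  \<open>T\<^sub>P\<close>.
\<close>

section \<open>Evaluation of polynomials\<close>

definition poly_lift :: "('c::zero \<Rightarrow> 'b::comm_ring_1) \<Rightarrow> ('m \<Rightarrow> 'b) \<Rightarrow> ('m \<Rightarrow>\<^sub>0 'c) \<Rightarrow> 'b" where
  "poly_lift c \<psi> f = (\<Sum>m\<in>Poly_Mapping.keys f. c (Poly_Mapping.lookup f m) * \<psi> m)"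

lemma poly_lift_zero [simp]: "poly_lift c \<psi> 0 = 0"
  by (simp add: poly_lift_def)

lemma poly_mapping_sum_single:
  "f = (\<Sum>m\<in>Poly_Mapping.keys f. Poly_Mapping.single m (Poly_Mapping.lookup f m))"
  by (rule poly_mapping_eqI)
     (auto simp: lookup_sum lookup_single when_def in_keys_iff)

locale poly_lift_hom =
  fixes c :: "'c::comm_ring_1 \<Rightarrow> 'b::comm_ring_1" and \<psi> :: "'m::comm_monoid_add \<Rightarrow> 'b"
  assumes coeff_hom: "comm_ring_hom c"
    and monom_zero: "\<psi> 0 = 1"
    and monom_add: "\<And>a b. \<psi> (a + b) = \<psi> a * \<psi> b"
begin

interpretation c: comm_ring_hom c by (rule coeff_hom)

lemma poly_lift_single: "poly_lift c \<psi> (Poly_Mapping.single m z) = c z * \<psi> m"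
  by (cases "z = 0") (auto simp: poly_lift_def)

lemma poly_lift_add: "poly_lift c \<psi> (f + g) = poly_lift c \<psi> f + poly_lift c \<psi> g"
  unfolding poly_lift_def by (rule setsum_keys_plus_distrib) (simp_all add: c.hom_add distrib_right)

lemma poly_lift_sum: "poly_lift c \<psi> (sum F A) = (\<Sum>x\<in>A. poly_lift c \<psi> (F x))"
  by (induction A rule: infinite_finite_induct) (simp_all add: poly_lift_add)

lemma poly_lift_mult: "poly_lift c \<psi> (f * g) = poly_lift c \<psi> f * poly_lift c \<psi> g"
proof -
  have "f * g = (\<Sum>m\<in>Poly_Mapping.keys f. \<Sum>n\<in>Poly_Mapping.keys g.
      Poly_Mapping.single (m + n) (Poly_Mapping.lookup f m * Poly_Mapping.lookup g n))"
    by (subst poly_mapping_sum_single[of f], subst poly_mapping_sum_single[of g])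
       (simp add: sum_product mult_single)
  then have "poly_lift c \<psi> (f * g) = (\<Sum>m\<in>Poly_Mapping.keys f. \<Sum>n\<in>Poly_Mapping.keys g.
      c (Poly_Mapping.lookup f m) * \<psi> m * (c (Poly_Mapping.lookup g n) * \<psi> n))"
    by (simp add: poly_lift_sum poly_lift_single c.hom_mult monom_add mult_ac)
  then show ?thesis
    by (simp add: poly_lift_def sum_product)
qed

lemma comm_ring_hom: "comm_ring_hom (poly_lift c \<psi>)"
  by unfold_locales
     (simp_all add: poly_lift_add poly_lift_mult poly_lift_single[of 0 1, simplified] monom_zero)

end

definition monom_eval :: "('v \<Rightarrow> 'b::comm_monoid_mult) \<Rightarrow> ('v \<Rightarrow>\<^sub>0 nat) \<Rightarrow> 'b" where
  "monom_eval X m = (\<Prod>v\<in>Poly_Mapping.keys m. X v ^ Poly_Mapping.lookup m v)"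

lemma monom_eval_superset:
  assumes "finite A" "Poly_Mapping.keys m \<subseteq> A"
  shows "monom_eval X m = (\<Prod>v\<in>A. X v ^ Poly_Mapping.lookup m v)"
  unfolding monom_eval_def
  by (rule prod.mono_neutral_left) (use assms in \<open>auto simp: in_keys_iff\<close>)

lemma monom_eval_zero [simp]: "monom_eval X 0 = 1"
  by (simp add: monom_eval_def)

lemma monom_eval_add: "monom_eval X (a + b) = monom_eval X a * monom_eval X b"
proof -
  let ?A = "Poly_Mapping.keys a \<union> Poly_Mapping.keys b"
  have "monom_eval X (a + b) = (\<Prod>v\<in>?A. X v ^ Poly_Mapping.lookup (a + b) v)"
    by (rule monom_eval_superset) (use keys_add[of a b] in auto)
  then show ?thesis
    by (simp add: lookup_add power_add prod.distrib
        monom_eval_superset[of ?A a] monom_eval_superset[of ?A b])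
qed

lemma monom_eval_sum: "monom_eval X (sum f A) = (\<Prod>x\<in>A. monom_eval X (f x))"
  by (induction A rule: infinite_finite_induct) (simp_all add: monom_eval_add)

lemma monom_eval_single [simp]: "monom_eval X (Poly_Mapping.single v n) = X v ^ n"
  by (cases "n = 0") (simp_all add: monom_eval_def)

lemma monom_eval_mult_fun: "monom_eval (\<lambda>v. Y v * Z v) a = monom_eval Y a * monom_eval Z a"
  by (simp add: monom_eval_def power_mult_distrib prod.distrib)

lemma monom_eval_nonzero:
  fixes X :: "'v \<Rightarrow> 'b::idom"
  assumes "\<And>v. v \<in> Poly_Mapping.keys m \<Longrightarrow> X v \<noteq> 0"
  shows "monom_eval X m \<noteq> 0"
  using assms by (simp add: monom_eval_def)

lemma monom_eval_point_indicator:
  "monom_eval (\<lambda>v. if v = w then x else 1) m = x ^ Poly_Mapping.lookup m w"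
proof -
  let ?A = "insert w (Poly_Mapping.keys m)"
  have "monom_eval (\<lambda>v. if v = w then x else 1) m
      = (\<Prod>v\<in>?A. (if v = w then x else 1) ^ Poly_Mapping.lookup m v)"
    by (rule monom_eval_superset) auto
  also have "\<dots> = (\<Prod>v\<in>?A. if v = w then x ^ Poly_Mapping.lookup m v else 1)"
    by (rule prod.cong) auto
  finally show ?thesis
    by simp
qed

lemma monom_eval_eq_imp_eq:
  assumes "\<And>X :: 'v \<Rightarrow> complex. (\<And>v. X v \<noteq> 0) \<Longrightarrow> monom_eval X a = monom_eval X b"
  shows "a = b"
proof (rule poly_mapping_eqI)
  fix w
  have "(2::complex) ^ Poly_Mapping.lookup a w = 2 ^ Poly_Mapping.lookup b w"
    using assms[of "\<lambda>v. if v = w then 2 else 1"] by (simp add: monom_eval_point_indicator)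
  then have "of_nat (2 ^ Poly_Mapping.lookup a w) = (of_nat (2 ^ Poly_Mapping.lookup b w) :: complex)"
    by simp
  then have "(2::nat) ^ Poly_Mapping.lookup a w = 2 ^ Poly_Mapping.lookup b w"
    by (simp only: of_nat_eq_iff)
  then show "Poly_Mapping.lookup a w = Poly_Mapping.lookup b w"
    by simp
qed

definition poly_eval :: "('v \<Rightarrow> complex) \<Rightarrow> 'v cpoly \<Rightarrow> complex" where
  "poly_eval X = poly_lift id (monom_eval X)"

lemma poly_lift_hom_poly_eval: "poly_lift_hom id (monom_eval X)"
  by unfold_locales (simp_all add: monom_eval_add)

lemma comm_ring_hom_poly_eval: "comm_ring_hom (poly_eval X)"
  unfolding poly_eval_def by (rule poly_lift_hom.comm_ring_hom[OF poly_lift_hom_poly_eval])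

interpretation poly_eval: comm_ring_hom "poly_eval X"
  by (rule comm_ring_hom_poly_eval)

lemma poly_eval_pvar [simp]: "poly_eval X (pvar v) = X v"
  by (simp add: poly_eval_def pvar_def poly_lift_hom.poly_lift_single[OF poly_lift_hom_poly_eval])

lemma poly_eval_pmonom [simp]: "poly_eval X (pmonom a) = monom_eval X a"
  by (simp add: poly_eval_def pmonom_def poly_lift_hom.poly_lift_single[OF poly_lift_hom_poly_eval])

lemma ideal_gen_generator: "g \<in> G \<Longrightarrow> g \<in> ideal_gen V G"
  unfolding ideal_gen_def
  by (intro CollectI exI[of _ "{g}"] exI[of _ "\<lambda>_. 1"]) (simp add: poly_ring_def)

lemma ideal_gen_in_kernel:
  assumes "comm_ring_hom \<phi>" "\<And>g. g \<in> G \<Longrightarrow> \<phi> g = 0" "f \<in> ideal_gen V G"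
  shows "\<phi> f = 0"
proof -
  interpret comm_ring_hom \<phi> by (rule assms(1))
  obtain A c where A: "A \<subseteq> G" "f = (\<Sum>g\<in>A. c g * g)"
    using assms(3) unfolding ideal_gen_def by blast
  have "\<phi> (c g * g) = 0" if "g \<in> A" for g
    using that A(1) assms(2) by (auto simp: hom_mult)
  then show ?thesis
    by (simp add: A(2) hom_sum)
qed

lemma saturation_in_kernel:
  fixes \<phi> :: "'v cpoly \<Rightarrow> 'b::idom"
  assumes "comm_ring_hom \<phi>" "\<And>g. g \<in> I \<Longrightarrow> \<phi> g = 0" "\<And>v. v \<in> V \<Longrightarrow> \<phi> (pvar v) \<noteq> 0"
    and "f \<in> saturation V I"
  shows "\<phi> f = 0"
proof -
  interpret comm_ring_hom \<phi> by (rule assms(1))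
  obtain k where "(\<Prod>v\<in>V. pvar v) ^ k * f \<in> I"
    using assms(4) unfolding saturation_def by blast
  then have "\<phi> ((\<Prod>v\<in>V. pvar v) ^ k * f) = 0"
    by (rule assms(2))
  then have "(\<Prod>v\<in>V. \<phi> (pvar v)) ^ k * \<phi> f = 0"
    by (simp add: hom_mult hom_power hom_prod)
  moreover have "(\<Prod>v\<in>V. \<phi> (pvar v)) \<noteq> 0"
    using assms(3) by (cases "finite V") simp_all
  ultimately show ?thesis
    by simp
qed

section \<open>Minors of matrices of low rank\<close>

lemma mat_sum_products_eq_mult:
  fixes U :: "'k \<Rightarrow> nat \<Rightarrow> 'b::comm_ring_1"
  assumes h: "bij_betw h {..<r} K" and "r \<le> n"
  shows "Matrix.mat n n (\<lambda>(i, j). \<Sum>k\<in>K. U k i * W k j)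
    = Matrix.mat n n (\<lambda>(i, l). if l < r then U (h l) i else 0)
      * Matrix.mat n n (\<lambda>(l, j). if l < r then W (h l) j else 0)"
    (is "?M = ?A * ?B")
proof (rule eq_matI)
  fix i j assume "i < dim_row (?A * ?B)" "j < dim_col (?A * ?B)"
  then have ij: "i < n" "j < n" by auto
  have "(\<Sum>k\<in>K. U k i * W k j) = (\<Sum>l<r. U (h l) i * W (h l) j)"
    using sum.reindex_bij_betw[OF h, of "\<lambda>k. U k i * W k j"] by simp
  also have "\<dots> = (\<Sum>l<n. if l < r then U (h l) i * W (h l) j else 0)"
    using \<open>r \<le> n\<close> by (simp add: sum.If_cases Int_absorb1 flip: lessThan_def)
  finally show "?M $$ (i, j) = (?A * ?B) $$ (i, j)"
    using ij by (simp add: scalar_prod_def atLeast0LessThan if_distrib cong: if_cong)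
qed auto

lemma det_mat_sum_products_eq_0:
  fixes U :: "'k \<Rightarrow> nat \<Rightarrow> 'b::comm_ring_1"
  assumes "finite K" "card K < n"
  shows "Determinant.det (Matrix.mat n n (\<lambda>(i, j). \<Sum>k\<in>K. U k i * W k j)) = 0"
proof -
  obtain h where h: "bij_betw h {..<card K} K"
    using ex_bij_betw_nat_finite[OF assms(1)] by (auto simp: atLeast0LessThan)
  let ?B = "Matrix.mat n n (\<lambda>(l, j). if l < card K then W (h l) j else 0)"
  have "(\<Prod>i = 0..<n. ?B $$ (i, p i)) = 0" if p: "p permutes {0..<n}" for p
  proof (rule prod_zero)
    have "p (n - 1) < n"
      using permutes_in_image[OF p, of "n - 1"] assms(2) by simp
    then show "\<exists>l\<in>{0..<n}. ?B $$ (l, p l) = 0"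
      using assms(2) by (intro bexI[of _ "n - 1"]) auto
  qed simp
  then have "Determinant.det ?B = 0"
    unfolding det_def by simp
  then show ?thesis
    using assms(2) by (simp add: mat_sum_products_eq_mult[OF h] det_mult[of _ n])
qed

lemma minor_det_eq_det_mat:
  assumes "length rs = n" "length cs = n"
  shows "minor_det M rs cs = Determinant.det (Matrix.mat n n (\<lambda>(i, j). M (rs ! i) (cs ! j)))"
proof -
  have "(\<Prod>i = 0..<n. Matrix.mat n n (\<lambda>(i, j). M (rs ! i) (cs ! j)) $$ (i, p i))
      = (\<Prod>i<n. M (rs ! i) (cs ! p i))" if p: "p permutes {0..<n}" for p
    using permutes_in_image[OF p] by (auto simp: atLeast0LessThan intro: prod.cong)
  then show ?thesis
    using assms unfolding minor_det_def det_def by (simp add: atLeast0LessThan)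
qed

lemma minor_det_cong:
  assumes "\<And>p F. p \<in> set rs \<Longrightarrow> F \<in> set cs \<Longrightarrow> M p F = M' p F" "length rs = length cs"
  shows "minor_det M rs cs = minor_det M' rs cs"
proof -
  have "M (rs ! i) (cs ! \<sigma> i) = M' (rs ! i) (cs ! \<sigma> i)"
    if "\<sigma> permutes {..<length rs}" "i < length rs" for \<sigma> i
    using that permutes_in_image[OF that(1), of i] assms by simp
  then show ?thesis
    unfolding minor_det_def by (intro sum.cong prod.cong refl) auto
qed

lemma minor_det_sum_products_eq_0:
  assumes "finite K" "card K < length rs" "length cs = length rs"
  shows "minor_det (\<lambda>p F. \<Sum>k\<in>K. U k p * W k F) rs cs = 0"
  using assms det_mat_sum_products_eq_0[of K "length rs" "\<lambda>k i. U k (rs ! i)" "\<lambda>k j. W k (cs ! j)"]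
  by (simp add: minor_det_eq_det_mat)

lemma (in comm_ring_hom) hom_minor_det:
  "hom (minor_det M rs cs) = minor_det (\<lambda>p F. hom (M p F)) rs cs"
  by (simp add: minor_det_def hom_sum hom_mult hom_prod hom_of_int)

section \<open>Scaled slack matrices\<close>

definition facet_inequality :: "'a::euclidean_space set \<Rightarrow> 'a set \<Rightarrow> 'a \<times> real" where
  "facet_inequality P F =
     (SOME (a, b). a \<noteq> 0 \<and> P \<subseteq> {x. inner a x \<le> b} \<and> F = P \<inter> {x. inner a x = b})"

lemma facet_eq_inter_hyperplane:
  assumes "polytope P" "F facet_of P"
  shows "F = P \<inter> {x. inner (fst (facet_inequality P F)) x = snd (facet_inequality P F)}"
proof -
  obtain a b where "a \<noteq> 0" "P \<subseteq> {x. inner a x \<le> b}" "F = P \<inter> {x. inner a x = b}"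
    using facet_of_polyhedron[OF polytope_imp_polyhedron[OF assms(1)] assms(2)] by blast
  then have "\<exists>ab. (\<lambda>(a, b). a \<noteq> 0 \<and> P \<subseteq> {x. inner a x \<le> b} \<and> F = P \<inter> {x. inner a x = b}) ab"
    by blast
  from someI_ex[OF this] show ?thesis
    unfolding facet_inequality_def by (simp add: split_def)
qed

definition slack :: "'a::euclidean_space set \<Rightarrow> 'a \<Rightarrow> 'a set \<Rightarrow> real" where
  "slack P p F = snd (facet_inequality P F) - inner (fst (facet_inequality P F)) p"

lemma slack_eq_0_iff:
  assumes "polytope P" "p \<in> poly_vertices P" "F \<in> poly_facets P"
  shows "slack P p F = 0 \<longleftrightarrow> p \<in> F"
proof -
  define a b where "a = fst (facet_inequality P F)" and "b = snd (facet_inequality P F)"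
  have F: "F = P \<inter> {x. inner a x = b}"
    using facet_eq_inter_hyperplane[OF assms(1)] assms(3) by (simp add: a_def b_def poly_facets_def)
  have "p \<in> P"
    using assms(2) by (simp add: poly_vertices_def extreme_point_of_def)
  then have "p \<in> F \<longleftrightarrow> inner a p = b"
    by (subst F) simp
  then show ?thesis
    by (auto simp: slack_def simp flip: a_def b_def)
qed

definition scaled_slack ::
    "('a + 'a set \<Rightarrow> complex) \<Rightarrow> 'a::euclidean_space set \<Rightarrow> 'a \<times> 'a set \<Rightarrow> complex" where
  "scaled_slack e P = (\<lambda>(p, F). e (Inl p) * e (Inr F) * complex_of_real (slack P p F))"

lemma scaled_slack_factors_through_Basis:
  fixes P :: "'a::euclidean_space set"
  shows "\<exists>U W. \<forall>p F.
    scaled_slack e P (p, F) = (\<Sum>k\<in>insert None (Some ` (Basis :: 'a set)). U k p * W k F)"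
proof (intro exI allI)
  fix p F
  define a b where "a = fst (facet_inequality P F)" and "b = snd (facet_inequality P F)"
  have "inner a p = (\<Sum>i\<in>Basis. inner a i * inner p i)"
    by (rule euclidean_inner)
  then show "scaled_slack e P (p, F) = (\<Sum>k\<in>insert None (Some ` Basis).
      (e (Inl p) * (case k of None \<Rightarrow> 1 | Some i \<Rightarrow> - complex_of_real (inner p i)))
    * (e (Inr F) * (case k of None \<Rightarrow> complex_of_real b | Some i \<Rightarrow> complex_of_real (inner a i))))"
    by (simp add: scaled_slack_def slack_def a_def b_def sum.reindex sum_distrib_left
        algebra_simps sum_negf)
qed

lemma poly_eval_scaled_slack_symbolic_slack:
  assumes "polytope P" "p \<in> poly_vertices P" "F \<in> poly_facets P"
  shows "poly_eval (scaled_slack e P) (symbolic_slack P p F) = scaled_slack e P (p, F)"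
  using slack_eq_0_iff[OF assms] by (simp add: symbolic_slack_def scaled_slack_def)

lemma slack_minors_vanish_at_scaled_slack:
  fixes P :: "'a::euclidean_space set"
  assumes "polytope P" "h \<in> slack_minors (DIM('a) + 2) P"
  shows "poly_eval (scaled_slack e P) h = 0"
proof -
  obtain rs cs where h: "h = minor_det (symbolic_slack P) rs cs"
    and len: "length rs = DIM('a) + 2" "length cs = DIM('a) + 2"
    and sub: "set rs \<subseteq> poly_vertices P" "set cs \<subseteq> poly_facets P"
    using assms(2) unfolding slack_minors_def by blast
  obtain U W where UW: "\<And>p F. scaled_slack e P (p, F)
      = (\<Sum>k\<in>insert None (Some ` (Basis :: 'a set)). U k p * W k F)"
    using scaled_slack_factors_through_Basis by blast
  have "poly_eval (scaled_slack e P) h = minor_det (\<lambda>p F. scaled_slack e P (p, F)) rs cs"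
    unfolding h poly_eval.hom_minor_det
    using sub len
    by (intro minor_det_cong) (auto intro!: poly_eval_scaled_slack_symbolic_slack[OF assms(1)])
  also have "\<dots> = 0"
    unfolding UW using len by (intro minor_det_sum_products_eq_0) (auto simp: card_image card_insert_if)
  finally show ?thesis .
qed

lemma slack_ideal_vanishes_at_scaled_slack:
  fixes P :: "'a::euclidean_space set"
  assumes "polytope P" "\<And>z. e z \<noteq> 0" "f \<in> slack_ideal P"
  shows "poly_eval (scaled_slack e P) f = 0"
proof (rule saturation_in_kernel[OF comm_ring_hom_poly_eval])
  show "f \<in> saturation (slack_vars P) (ideal_gen (slack_vars P) (slack_minors (DIM('a) + 2) P))"
    using assms(3) by (simp add: slack_ideal_def)
  show "poly_eval (scaled_slack e P) g = 0"
    if "g \<in> ideal_gen (slack_vars P) (slack_minors (DIM('a) + 2) P)" for g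
    using slack_minors_vanish_at_scaled_slack[OF assms(1)] that
    by (rule ideal_gen_in_kernel[OF comm_ring_hom_poly_eval])
  show "poly_eval (scaled_slack e P) (pvar v) \<noteq> 0" if "v \<in> slack_vars P" for v
    using that slack_eq_0_iff[OF assms(1)] assms(2) by (auto simp: slack_vars_def scaled_slack_def)
qed

section \<open>Binomials in the slack ideal\<close>

lemma edge_monomial_map_zero [simp]: "edge_monomial_map 0 = 0"
  by (simp add: edge_monomial_map_def)

lemma edge_monomial_map_add: "edge_monomial_map (a + b) = edge_monomial_map a + edge_monomial_map b"
  unfolding edge_monomial_map_def split_def prod.collapse
  by (rule setsum_keys_plus_distrib[where f = "\<lambda>v n. Poly_Mapping.single (Inl (fst v)) n
      + Poly_Mapping.single (Inr (snd v)) n"]) (simp_all add: single_add add_ac)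

lemma monom_eval_edge_monomial_map:
  "monom_eval e (edge_monomial_map m) = monom_eval (\<lambda>(p, F). e (Inl p) * e (Inr F)) m"
  by (simp add: edge_monomial_map_def monom_eval_def[of _ m] monom_eval_sum monom_eval_add
      split_def power_mult_distrib)

lemma poly_lift_hom_toric:
  "poly_lift_hom (Poly_Mapping.single 0) (\<lambda>m. Poly_Mapping.single (edge_monomial_map m) (1::complex))"
  by unfold_locales (simp_all add: single_add mult_single edge_monomial_map_add)

lemma toric_hom_eq_poly_lift:
  "toric_hom = poly_lift (Poly_Mapping.single 0) (\<lambda>m. Poly_Mapping.single (edge_monomial_map m) 1)"
  by (simp add: fun_eq_iff toric_hom_def poly_lift_def mult_single)

lemma comm_ring_hom_toric_hom: "comm_ring_hom toric_hom"
  unfolding toric_hom_eq_poly_lift by (rule poly_lift_hom.comm_ring_hom[OF poly_lift_hom_toric])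

interpretation toric_hom: comm_ring_hom toric_hom
  by (rule comm_ring_hom_toric_hom)

lemma toric_hom_pmonom: "toric_hom (pmonom a) = Poly_Mapping.single (edge_monomial_map a) 1"
  by (simp add: toric_hom_eq_poly_lift pmonom_def poly_lift_hom.poly_lift_single[OF poly_lift_hom_toric])

lemma toric_hom_binomial_eq_0:
  "edge_monomial_map a = edge_monomial_map b \<Longrightarrow> toric_hom (pmonom a - pmonom b) = 0"
  by (simp add: toric_hom.hom_minus toric_hom_pmonom)

lemma edge_monomial_map_eq_if_binomial_in_slack_ideal:
  assumes "polytope P" "pmonom a - pmonom b \<in> slack_ideal P"
    and "Poly_Mapping.keys a \<subseteq> slack_vars P" "Poly_Mapping.keys b \<subseteq> slack_vars P"
  shows "edge_monomial_map a = edge_monomial_map b"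
proof (rule monom_eval_eq_imp_eq)
  define S where "S = scaled_slack (\<lambda>_. 1) P"
  have scaled: "scaled_slack e P = (\<lambda>v. (\<lambda>(p, F). e (Inl p) * e (Inr F)) v * S v)" for e
    by (auto simp: S_def scaled_slack_def)
  have eq: "monom_eval (scaled_slack e P) a = monom_eval (scaled_slack e P) b" if "\<And>z. e z \<noteq> 0" for e
    using slack_ideal_vanishes_at_scaled_slack[OF assms(1) that assms(2)]
    by (simp add: poly_eval.hom_minus)
  have "monom_eval S a \<noteq> 0"
    using assms(3) slack_eq_0_iff[OF assms(1)]
    by (intro monom_eval_nonzero) (auto simp: S_def scaled_slack_def slack_vars_def)
  moreover have "monom_eval S a = monom_eval S b"
    using eq[of "\<lambda>_. 1"] by (simp add: S_def)
  moreover fix e :: "'a + 'a set \<Rightarrow> complex" assume "\<And>z. e z \<noteq> 0"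
  ultimately show "monom_eval e (edge_monomial_map a) = monom_eval e (edge_monomial_map b)"
    using eq[of e] by (simp add: scaled monom_eval_mult_fun monom_eval_edge_monomial_map)
qed

theorem corollary3p5:
  fixes P :: "'a::euclidean_space set"
  assumes "polytope P"
    and "aff_dim P = int DIM('a)"
    and "pure_difference_binomial_ideal (slack_vars P) (slack_ideal P)"
  shows "slack_ideal P \<subseteq> toric_ideal P"
proof
  fix f assume f: "f \<in> slack_ideal P"
  obtain G where G: "G \<subseteq> {pmonom a - pmonom b | a b.
        Poly_Mapping.keys a \<subseteq> slack_vars P \<and> Poly_Mapping.keys b \<subseteq> slack_vars P}"
      and I: "slack_ideal P = ideal_gen (slack_vars P) G"
    using assms(3) unfolding pure_difference_binomial_ideal_def by blast
  have "toric_hom g = 0" if "g \<in> G" for g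
  proof -
    obtain a b where g: "g = pmonom a - pmonom b"
      and ab: "Poly_Mapping.keys a \<subseteq> slack_vars P" "Poly_Mapping.keys b \<subseteq> slack_vars P"
      using G \<open>g \<in> G\<close> by blast
    have "g \<in> slack_ideal P"
      unfolding I using \<open>g \<in> G\<close> by (rule ideal_gen_generator)
    then show ?thesis
      unfolding g using edge_monomial_map_eq_if_binomial_in_slack_ideal[OF assms(1) _ ab]
      by (intro toric_hom_binomial_eq_0) simp
  qed
  then have "toric_hom f = 0"
    using f unfolding I by (rule ideal_gen_in_kernel[OF comm_ring_hom_toric_hom])
  moreover have "f \<in> poly_ring (slack_vars P)"
    using f by (simp add: slack_ideal_def saturation_def)
  ultimately show "f \<in> toric_ideal P"
    by (simp add: toric_ideal_def)
qed

end
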